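(* Let $z,\tilde z\in\mathbb{R}^{2d}$, $n\ge1$, and assume $U\colon\mathbb{R}^d\to\mathbb{R}$ is twice continuously differentiable with $\nabla U$ being $L$-Lipschitz. Let $y=(y_0,\dots,y_n)$ be the optimized trajectory and $\Psi^n_{z,\tilde z}$ the coalescence map defined by $(y_1,\dots,y_n)$. Writing $y_k=(u_k,w_k)$ with $u_k,w_k\in\mathbb{R}^d$, for every $\xi\in\mathbb{R}^{2dn}$, \[ |\Psi^n_{z,\tilde z}(\xi)-\xi|^2\le 2\sum_{k=1}^n|E_k|^2+\frac{h^2L^2}{1-e^{-\gamma h}}\sum_{k=0}^{n-1}|u_k|^2. \]
   Context: Fix $d\ge 1$, $\gamma>0$, $h>0$ and $U\in C^2(\mathbb{R}^d)$. Points of $\mathbb{R}^{2d}$ are $z=(x,v)$. The OBABO one-step map is $\Psi_z(\xi)=(\Psi^X_z(\xi^{(1)}),\Psi^V_z(\xi^{(1)},\xi^{(2)}))$ for $z=(x,v)$, $\xi=(\xi^{(1)},\xi^{(2)})\in\mathbb{R}^d\times\mathbb{R}^d$, with $\Psi^X_z(\xi^{(1)})=x+he^{-\gamma h/2}v+(1-e^{-\gamma h})^{1/2}h\,\xi^{(1)}-\tfrac{h^2}{2}\nabla U(x)$ and $\Psi^V_z(\xi^{(1)},\xi^{(2)})=e^{-\gamma h}v+(1-e^{-\gamma h})^{1/2}(e^{-\gamma h/2}\xi^{(1)}+\xi^{(2)})-\tfrac h2 e^{-\gamma h/2}\bigl(\nabla U(x)+\nabla U(\Psi^X_z(\xi^{(1)}))\bigr)$.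 $\Psi^n_z\colon\mathbb{R}^{2dn}\to\mathbb{R}^{2d}$: $\Psi^1_z=\Psi_z$, $\Psi^{n+1}_z(\xi_1,\dots,\xi_{n+1})=\Psi_{\Psi^n_z(\xi_1,\dots,\xi_n)}(\xi_{n+1})$, $\Psi^0_z\equiv z$. For $y_1,\dots,y_n\in\mathbb{R}^{2d}$ with $y_n=0$, the coalescence map defined by $y$ is the unique $\Psi^n_{z,\tilde z}\colon\mathbb{R}^{2dn}\to\mathbb{R}^{2dn}$ with $\Psi^k_{\tilde z}(\tilde\zeta_1,\dots,\tilde\zeta_k)=\Psi^k_z(\xi_1,\dots,\xi_k)+y_k$ ($k=1,\dots,n$) where $\tilde\zeta=\Psi^n_{z,\tilde z}(\xi)$. Let $A_h=\begin{pmatrix} I_d & he^{-\gamma h/2}I_d\\ 0 & e^{-\gamma h}I_d\end{pmatrix}$, $L_h=(1-e^{-\gamma h})^{1/2}\begin{pmatrix} hI_d & 0\\ e^{-\gamma h/2}I_d & I_d\end{pmatrix}$, $\Sigma_{h,n}=\sum_{k=1}^n A_h^{n-k}L_hL_h^T(A_h^T)^{n-k}$ (positive definite), $\Delta z=\tilde z-z$, and $E_k=L_h^T(A_h^T)^{n-k}\Sigma_{h,n}^{-1}A_h^n\Delta z$ for $k=1,\dots,n$. The optimized trajectory is $y_0=\Delta z$, $y_{k+1}=A_hy_k-L_hE_{k+1}$ for $k=0,\dots,n-1$; it satisfies $y_n=0$. *)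

theory Defs
  imports "HOL-Analysis.Analysis"
begin

type_synonym 'd st = "(real^('d::finite)) \<times> (real^'d)"

text \<open>OBABO one-step map; G is the gradient of U.\<close>
definition PsiX :: "real \<Rightarrow> real \<Rightarrow> (real^('d::finite) \<Rightarrow> real^'d) \<Rightarrow> 'd st \<Rightarrow> real^'d \<Rightarrow> real^'d" where
  "PsiX \<gamma> h G z a = fst z + (h * exp (-\<gamma>*h/2)) *\<^sub>R snd z
     + (sqrt (1 - exp (-\<gamma>*h)) * h) *\<^sub>R a - (h^2/2) *\<^sub>R G (fst z)"

definition PsiV :: "real \<Rightarrow> real \<Rightarrow> (real^('d::finite) \<Rightarrow> real^'d) \<Rightarrow> 'd st \<Rightarrow> real^'d \<Rightarrow> real^'d \<Rightarrow> real^'d" where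
  "PsiV \<gamma> h G z a b = exp (-\<gamma>*h) *\<^sub>R snd z
     + sqrt (1 - exp (-\<gamma>*h)) *\<^sub>R (exp (-\<gamma>*h/2) *\<^sub>R a + b)
     - (h/2 * exp (-\<gamma>*h/2)) *\<^sub>R (G (fst z) + G (PsiX \<gamma> h G z a))"

definition Psi :: "real \<Rightarrow> real \<Rightarrow> (real^('d::finite) \<Rightarrow> real^'d) \<Rightarrow> 'd st \<Rightarrow> 'd st \<Rightarrow> 'd st" where
  "Psi \<gamma> h G z \<xi> = (PsiX \<gamma> h G z (fst \<xi>), PsiV \<gamma> h G z (fst \<xi>) (snd \<xi>))"

text \<open>n-step map: a point of R^(2dn) is a list of n elements of R^(2d);
  Psi^k_z(xi_1..xi_k) = PsiN z (take k xs), PsiN z [] = z.\<close>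
definition PsiN :: "real \<Rightarrow> real \<Rightarrow> (real^('d::finite) \<Rightarrow> real^'d) \<Rightarrow> 'd st \<Rightarrow> 'd st list \<Rightarrow> 'd st" where
  "PsiN \<gamma> h G z xs = foldl (Psi \<gamma> h G) z xs"

text \<open>Coalescence map defined by y_1..y_n (the unique such map).\<close>
definition coal :: "real \<Rightarrow> real \<Rightarrow> (real^('d::finite) \<Rightarrow> real^'d) \<Rightarrow> nat \<Rightarrow> ('d::finite) st \<Rightarrow> 'd st \<Rightarrow> (nat \<Rightarrow> 'd st)
    \<Rightarrow> 'd st list \<Rightarrow> 'd st list" where
  "coal \<gamma> h G n z zt y xs = (THE zs. length zs = n \<and>
      (\<forall>k\<in>{1..n}. PsiN \<gamma> h G zt (take k zs) = PsiN \<gamma> h G z (take k xs) + y k))"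

text \<open>Block matrices A_h, L_h and their transposes, acting on R^(2d) = R^d x R^d.\<close>
definition Ah :: "real \<Rightarrow> real \<Rightarrow> ('d::finite) st \<Rightarrow> 'd st" where
  "Ah \<gamma> h p = (fst p + (h * exp (-\<gamma>*h/2)) *\<^sub>R snd p, exp (-\<gamma>*h) *\<^sub>R snd p)"

definition AhT :: "real \<Rightarrow> real \<Rightarrow> ('d::finite) st \<Rightarrow> 'd st" where
  "AhT \<gamma> h p = (fst p, (h * exp (-\<gamma>*h/2)) *\<^sub>R fst p + exp (-\<gamma>*h) *\<^sub>R snd p)"

definition Lh :: "real \<Rightarrow> real \<Rightarrow> ('d::finite) st \<Rightarrow> 'd st" where
  "Lh \<gamma> h p = sqrt (1 - exp (-\<gamma>*h)) *\<^sub>R (h *\<^sub>R fst p, exp (-\<gamma>*h/2) *\<^sub>R fst p + snd p)"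

definition LhT :: "real \<Rightarrow> real \<Rightarrow> ('d::finite) st \<Rightarrow> 'd st" where
  "LhT \<gamma> h p = sqrt (1 - exp (-\<gamma>*h)) *\<^sub>R (h *\<^sub>R fst p + exp (-\<gamma>*h/2) *\<^sub>R snd p, snd p)"

definition Sigma_hn :: "real \<Rightarrow> real \<Rightarrow> nat \<Rightarrow> ('d::finite) st \<Rightarrow> 'd st" where
  "Sigma_hn \<gamma> h n p = (\<Sum>k=1..n. (Ah \<gamma> h ^^ (n-k)) (Lh \<gamma> h (LhT \<gamma> h ((AhT \<gamma> h ^^ (n-k)) p))))"

definition Ek :: "real \<Rightarrow> real \<Rightarrow> nat \<Rightarrow> ('d::finite) st \<Rightarrow> 'd st \<Rightarrow> nat \<Rightarrow> 'd st" where
  "Ek \<gamma> h n z zt k = LhT \<gamma> h ((AhT \<gamma> h ^^ (n-k))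
      (inv (Sigma_hn \<gamma> h n) ((Ah \<gamma> h ^^ n) (zt - z))))"

primrec ytraj :: "real \<Rightarrow> real \<Rightarrow> nat \<Rightarrow> ('d::finite) st \<Rightarrow> 'd st \<Rightarrow> nat \<Rightarrow> 'd st" where
  "ytraj \<gamma> h n z zt 0 = zt - z"
| "ytraj \<gamma> h n z zt (Suc k) = Ah \<gamma> h (ytraj \<gamma> h n z zt k) - Lh \<gamma> h (Ek \<gamma> h n z zt (Suc k))"

end

theory Submission
  imports Defs
begin

(*
  One OBABO step splits as Psi_w(xi) = A_h w + L_h xi - F_w(xi1), where F_w collects the
  two gradient evaluations. The coalescence map makes the chain started at zt follow the
  chain started at z shifted by y_k. Since y_(k+1) = A_h y_k - L_h E_(k+1), the linear parts
  cancel and L_h (zeta_(k+1) - xi_(k+1) + E_(k+1)) is a difference of gradient terms, which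
  L_h^(-1) turns into h / (2 sqrt(1 - exp(-gamma h))) times
  (G(x + u_k) - G(x), exp(-gamma h/2) (G(X + u_(k+1)) - G(X))).
  The Lipschitz bound on G = grad U therefore controls the k-th noise increment by
  2 |E_(k+1)|^2 + h^2 L^2 (|u_k|^2 + |u_(k+1)|^2) / (2 (1 - exp(-gamma h))), and summing over k
  gives the estimate, because u_n = 0: y_n = 0 as Sigma_(h,n) is positive definite.
*)

lemma linear_funpow:
  fixes f :: "'a::real_vector \<Rightarrow> 'a"
  assumes "linear f"
  shows "linear (f ^^ m)"
  by (induction m) (simp_all add: linear_id[unfolded id_def] linear_compose[OF _ assms, unfolded o_def])

lemma adjoint_funpow:
  fixes f g :: "'a::real_inner \<Rightarrow> 'a"
  assumes "\<And>p q. inner (f q) p = inner q (g p)"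
  shows "inner ((f ^^ m) q) p = inner q ((g ^^ m) p)"
proof (induction m arbitrary: p)
  case (Suc m)
  have "inner ((f ^^ Suc m) q) p = inner q ((g ^^ m) (g p))"
    by (simp add: assms Suc.IH)
  then show ?case
    by (simp only: funpow_Suc_right o_apply)
qed simp

lemma linear_Ah: "linear (Ah \<gamma> h)"
  by (rule linearI) (auto simp: Ah_def algebra_simps)

lemma linear_Lh: "linear (Lh \<gamma> h)"
  by (rule linearI) (auto simp: Lh_def algebra_simps)

lemma linear_AhT: "linear (AhT \<gamma> h)"
  by (rule linearI) (auto simp: AhT_def algebra_simps)

lemma linear_LhT: "linear (LhT \<gamma> h)"
  by (rule linearI) (auto simp: LhT_def algebra_simps)

lemma inner_Ah: "inner (Ah \<gamma> h q) p = inner q (AhT \<gamma> h p)"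
  by (cases q, cases p) (simp add: Ah_def AhT_def inner_add_left inner_add_right algebra_simps inner_commute)

lemma inner_Lh: "inner (Lh \<gamma> h q) p = inner q (LhT \<gamma> h p)"
  by (cases q, cases p) (simp add: Lh_def LhT_def inner_add_left inner_add_right algebra_simps inner_commute)

lemma noise_scale_pos:
  assumes "\<gamma> > 0" "h > 0"
  shows "sqrt (1 - exp (-\<gamma>*h)) > 0"
  using assms by simp

lemma inj_Lh:
  assumes "\<gamma> > 0" "h > 0"
  shows "inj (Lh \<gamma> h)"
proof (subst linear_injective_0[OF linear_Lh], safe)
  fix p :: "'d::finite st"
  assume "Lh \<gamma> h p = 0"
  then show "p = 0"
    using noise_scale_pos[OF assms] assms by (cases p) (auto simp: Lh_def zero_prod_def)
qed

lemma inj_LhT: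
  assumes "\<gamma> > 0" "h > 0"
  shows "inj (LhT \<gamma> h)"
proof (subst linear_injective_0[OF linear_LhT], safe)
  fix p :: "'d::finite st"
  assume "LhT \<gamma> h p = 0"
  then show "p = 0"
    using noise_scale_pos[OF assms] assms by (cases p) (auto simp: LhT_def zero_prod_def)
qed

lemma linear_Sigma_hn: "linear (Sigma_hn \<gamma> h n)"
proof -
  have "linear ((Ah \<gamma> h ^^ (n-k)) \<circ> Lh \<gamma> h \<circ> LhT \<gamma> h \<circ> (AhT \<gamma> h ^^ (n-k)))" for k
    by (intro linear_compose linear_funpow linear_Ah linear_Lh linear_LhT linear_AhT)
  then show ?thesis
    unfolding Sigma_hn_def[abs_def] by (intro linear_compose_sum) (auto simp: o_def)
qed

lemma inner_Sigma_hn: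
  "inner p (Sigma_hn \<gamma> h n p) = (\<Sum>k=1..n. norm (LhT \<gamma> h ((AhT \<gamma> h ^^ (n-k)) p))^2)"
  unfolding Sigma_hn_def inner_sum_right
  by (rule sum.cong) (simp_all add: inner_commute[of p] adjoint_funpow[OF inner_Ah] inner_Lh power2_norm_eq_inner)

lemma inj_Sigma_hn:
  assumes "\<gamma> > 0" "h > 0" "n \<ge> 1"
  shows "inj (Sigma_hn \<gamma> h n)"
proof (subst linear_injective_0[OF linear_Sigma_hn], safe)
  fix p :: "'d::finite st"
  assume "Sigma_hn \<gamma> h n p = 0"
  then have "(\<Sum>k=1..n. norm (LhT \<gamma> h ((AhT \<gamma> h ^^ (n-k)) p))^2) = 0"
    using inner_Sigma_hn[of p \<gamma> h n] by simp
  then have "\<forall>k\<in>{1..n}. LhT \<gamma> h ((AhT \<gamma> h ^^ (n-k)) p) = 0"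
    by (subst (asm) sum_nonneg_eq_0_iff) auto
  then have "LhT \<gamma> h p = 0"
    using assms(3) by (metis atLeastAtMost_iff diff_self_eq_0 funpow_0 order_refl)
  then show "p = 0"
    using inj_LhT[OF assms(1,2)] linear_0[OF linear_LhT] by (metis injD)
qed

lemma Sigma_hn_inv_apply:
  assumes "\<gamma> > 0" "h > 0" "n \<ge> 1"
  shows "Sigma_hn \<gamma> h n (inv (Sigma_hn \<gamma> h n) r) = r"
proof -
  have "surj (Sigma_hn \<gamma> h n)"
    using linear_injective_imp_surjective linear_Sigma_hn inj_Sigma_hn[OF assms] by blast
  then show ?thesis
    by (rule surj_f_inv_f)
qed

lemma ytraj_closed_form:
  "ytraj \<gamma> h n z zt k = (Ah \<gamma> h ^^ k) (zt - z)
     - (\<Sum>j=1..k. (Ah \<gamma> h ^^ (k-j)) (Lh \<gamma> h (Ek \<gamma> h n z zt j)))"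
proof (induction k)
  case (Suc k)
  have "ytraj \<gamma> h n z zt (Suc k) = (Ah \<gamma> h ^^ Suc k) (zt - z)
      - (\<Sum>j=1..k. Ah \<gamma> h ((Ah \<gamma> h ^^ (k-j)) (Lh \<gamma> h (Ek \<gamma> h n z zt j))))
      - Lh \<gamma> h (Ek \<gamma> h n z zt (Suc k))"
    using Suc by (simp add: linear_diff[OF linear_Ah] linear_sum[OF linear_Ah])
  also have "(\<Sum>j=1..k. Ah \<gamma> h ((Ah \<gamma> h ^^ (k-j)) (Lh \<gamma> h (Ek \<gamma> h n z zt j))))
     = (\<Sum>j=1..k. (Ah \<gamma> h ^^ (Suc k-j)) (Lh \<gamma> h (Ek \<gamma> h n z zt j)))"
    by (rule sum.cong) (auto simp: Suc_diff_le)
  finally show ?case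
    by (simp add: algebra_simps)
qed simp

lemma ytraj_n_eq_0:
  assumes "\<gamma> > 0" "h > 0" "n \<ge> 1"
  shows "ytraj \<gamma> h n z zt n = 0"
  using Sigma_hn_inv_apply[OF assms, of "(Ah \<gamma> h ^^ n) (zt - z)"]
  by (simp add: ytraj_closed_form Sigma_hn_def Ek_def)

definition Psi_force ::
    "real \<Rightarrow> real \<Rightarrow> (real^('d::finite) \<Rightarrow> real^'d) \<Rightarrow> 'd st \<Rightarrow> real^'d \<Rightarrow> 'd st" where
  "Psi_force \<gamma> h G w a =
     (h/2) *\<^sub>R (h *\<^sub>R G (fst w), exp (-\<gamma>*h/2) *\<^sub>R (G (fst w) + G (PsiX \<gamma> h G w a)))"

lemma Psi_eq_Ah_Lh: "Psi \<gamma> h G w \<xi> = Ah \<gamma> h w + Lh \<gamma> h \<xi> - Psi_force \<gamma> h G w (fst \<xi>)"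
  by (simp add: Psi_def PsiX_def PsiV_def Ah_def Lh_def Psi_force_def algebra_simps power2_eq_square)

lemma fst_Lh: "fst (Lh \<gamma> h p) = (sqrt (1 - exp (-\<gamma>*h)) * h) *\<^sub>R fst p"
  by (simp add: Lh_def)

lemma PsiX_eq_fst_Ah:
  "PsiX \<gamma> h G w a
     = fst (Ah \<gamma> h w) + (sqrt (1 - exp (-\<gamma>*h)) * h) *\<^sub>R a - (h^2/2) *\<^sub>R G (fst w)"
  by (simp add: PsiX_def Ah_def)

lemma inj_Psi:
  assumes "\<gamma> > 0" "h > 0"
  shows "inj (Psi \<gamma> h G w)"
proof (rule injI)
  fix \<xi> \<xi>'
  assume eq: "Psi \<gamma> h G w \<xi> = Psi \<gamma> h G w \<xi>'"
  then have "PsiX \<gamma> h G w (fst \<xi>) = PsiX \<gamma> h G w (fst \<xi>')"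
    by (simp add: Psi_def)
  then have "fst \<xi> = fst \<xi>'"
    using noise_scale_pos[OF assms] assms by (simp add: PsiX_eq_fst_Ah)
  then have "Lh \<gamma> h \<xi> = Lh \<gamma> h \<xi>'"
    using eq by (simp add: Psi_eq_Ah_Lh)
  then show "\<xi> = \<xi>'"
    by (rule injD[OF inj_Lh[OF assms]])
qed

lemma surj_Psi:
  fixes w :: "('d::finite) st"
  assumes "\<gamma> > 0" "h > 0"
  shows "surj (Psi \<gamma> h G w)"
proof -
  define c where "c = sqrt (1 - exp (-\<gamma>*h)) * h"
  have "c \<noteq> 0"
    using noise_scale_pos[OF assms] assms by (simp add: c_def)
  have "surj (Lh \<gamma> h :: 'd st \<Rightarrow> 'd st)"
    using linear_injective_imp_surjective linear_Lh inj_Lh[OF assms] by blast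
  have "\<exists>\<xi>. Psi \<gamma> h G w \<xi> = t" for t
  proof -
    define a where "a = (1/c) *\<^sub>R (fst t - fst (Ah \<gamma> h w) + (h^2/2) *\<^sub>R G (fst w))"
    obtain \<xi> where \<xi>: "Lh \<gamma> h \<xi> = t - Ah \<gamma> h w + Psi_force \<gamma> h G w a"
      using \<open>surj (Lh \<gamma> h)\<close> by (metis surjD)
    have "c *\<^sub>R fst \<xi> = c *\<^sub>R a"
      using arg_cong[OF \<xi>, of fst] \<open>c \<noteq> 0\<close>
      by (simp add: fst_Lh a_def Psi_force_def c_def power2_eq_square)
    then have "fst \<xi> = a"
      using \<open>c \<noteq> 0\<close> by simp
    then have "Psi \<gamma> h G w \<xi> = t"
      by (simp add: Psi_eq_Ah_Lh \<xi>)
    then show ?thesis ..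
  qed
  then show ?thesis
    unfolding surj_def by metis
qed

lemma bij_Psi:
  assumes "\<gamma> > 0" "h > 0"
  shows "bij (Psi \<gamma> h G w)"
  using inj_Psi[OF assms] surj_Psi[OF assms] by (rule bijI)

lemma Lh_eq_force_diffD:
  assumes "\<gamma> > 0" "h > 0"
    and "Lh \<gamma> h q = (h/2) *\<^sub>R (h *\<^sub>R a, exp (-\<gamma>*h/2) *\<^sub>R (a + b))"
  shows "q = (h / (2 * sqrt (1 - exp (-\<gamma>*h)))) *\<^sub>R (a, exp (-\<gamma>*h/2) *\<^sub>R b)"
proof (rule injD[OF inj_Lh[OF assms(1,2)]])
  define c where "c = sqrt (1 - exp (-\<gamma>*h))"
  have "c > 0"
    unfolding c_def by (rule noise_scale_pos[OF assms(1,2)])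
  have "Lh \<gamma> h (a, exp (-\<gamma>*h/2) *\<^sub>R b) = c *\<^sub>R (h *\<^sub>R a, exp (-\<gamma>*h/2) *\<^sub>R (a + b))"
    by (simp add: Lh_def c_def scaleR_add_right)
  then have "Lh \<gamma> h ((h / (2 * c)) *\<^sub>R (a, exp (-\<gamma>*h/2) *\<^sub>R b))
      = (h/2) *\<^sub>R (h *\<^sub>R a, exp (-\<gamma>*h/2) *\<^sub>R (a + b))"
    using \<open>c > 0\<close> by (simp add: linear_scale[OF linear_Lh] del: scaleR_Pair)
  then show "Lh \<gamma> h q = Lh \<gamma> h ((h / (2 * c)) *\<^sub>R (a, exp (-\<gamma>*h/2) *\<^sub>R b))"
    using assms(3) by simp
qed

lemma Psi_shift_noise_diff:
  assumes "\<gamma> > 0" "h > 0"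
    and eq: "Psi \<gamma> h G (w + p) \<xi>' = Psi \<gamma> h G w \<xi> + (Ah \<gamma> h p - Lh \<gamma> h E)"
  shows "\<xi>' - \<xi> = - E + (h / (2 * sqrt (1 - exp (-\<gamma>*h)))) *\<^sub>R
           (G (fst w + fst p) - G (fst w),
            exp (-\<gamma>*h/2) *\<^sub>R (G (PsiX \<gamma> h G (w + p) (fst \<xi>')) - G (PsiX \<gamma> h G w (fst \<xi>))))"
proof -
  let ?g1 = "G (fst w + fst p) - G (fst w)"
  let ?g2 = "G (PsiX \<gamma> h G (w + p) (fst \<xi>')) - G (PsiX \<gamma> h G w (fst \<xi>))"
  have "Lh \<gamma> h (\<xi>' - \<xi> + E)
      = Psi_force \<gamma> h G (w + p) (fst \<xi>') - Psi_force \<gamma> h G w (fst \<xi>)"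
    using eq by (simp add: Psi_eq_Ah_Lh linear_add[OF linear_Ah] linear_add[OF linear_Lh]
        linear_diff[OF linear_Lh] algebra_simps)
  also have "\<dots> = (h/2) *\<^sub>R (h *\<^sub>R ?g1, exp (-\<gamma>*h/2) *\<^sub>R (?g1 + ?g2))"
    by (simp add: Psi_force_def algebra_simps)
  finally have "\<xi>' - \<xi> + E = (h / (2 * sqrt (1 - exp (-\<gamma>*h)))) *\<^sub>R (?g1, exp (-\<gamma>*h/2) *\<^sub>R ?g2)"
    by (rule Lh_eq_force_diffD[OF assms(1,2)])
  then show ?thesis
    by (metis add_diff_cancel_right' diff_conv_add_uminus add.commute)
qed

lemma norm_add_power2_le:
  fixes a b :: "'a::real_normed_vector"
  shows "norm (a + b)^2 \<le> 2 * norm a^2 + 2 * norm b^2"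
proof -
  have "norm (a + b)^2 \<le> (norm a + norm b)^2"
    by (simp add: norm_triangle_ineq power_mono)
  also have "\<dots> \<le> 2 * norm a^2 + 2 * norm b^2"
    using sum_squares_bound[of "norm a" "norm b"] by (simp add: power2_eq_square algebra_simps)
  finally show ?thesis .
qed

lemma lipschitz_diff_power2_le:
  assumes "\<And>x x'. norm (G x - G x') \<le> L * norm (x - x')"
  shows "norm (G (x + u) - G x)^2 \<le> L^2 * norm u^2"
proof -
  have "norm (G (x + u) - G x) \<le> L * norm u"
    using assms[of "x + u" x] by simp
  then show ?thesis
    using power_mono[OF _ norm_ge_zero] by (metis power_mult_distrib)
qed

lemma Psi_shift_noise_norm_le:
  assumes "\<gamma> > 0" "h > 0"
    and lip: "\<And>x x'. norm (G x - G x') \<le> L * norm (x - x')"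
    and eq: "Psi \<gamma> h G (w + p) \<xi>' = Psi \<gamma> h G w \<xi> + (Ah \<gamma> h p - Lh \<gamma> h E)"
  shows "norm (\<xi>' - \<xi>)^2 \<le> 2 * norm E^2
     + h^2 * L^2 / (2 * (1 - exp (-\<gamma>*h)))
         * (norm (fst p)^2 + norm (fst (Ah \<gamma> h p - Lh \<gamma> h E))^2)"
proof -
  define c where "c = sqrt (1 - exp (-\<gamma>*h))"
  define e where "e = exp (-\<gamma>*h/2)"
  define u' where "u' = fst (Ah \<gamma> h p - Lh \<gamma> h E)"
  define X where "X = PsiX \<gamma> h G w (fst \<xi>)"
  define g1 where "g1 = G (fst w + fst p) - G (fst w)"
  define g2 where "g2 = G (PsiX \<gamma> h G (w + p) (fst \<xi>')) - G X"
  have "c > 0"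
    unfolding c_def by (rule noise_scale_pos[OF assms(1,2)])
  have c2: "c^2 = 1 - exp (-\<gamma>*h)"
    using assms(1,2) by (simp add: c_def)
  have "e^2 = exp (-\<gamma>*h)"
    by (simp add: e_def flip: exp_double)
  then have "e^2 \<le> 1"
    using assms(1,2) by simp
  have "PsiX \<gamma> h G (w + p) (fst \<xi>') = X + u'"
    using arg_cong[OF eq, of fst] by (simp add: Psi_def X_def u'_def)
  then have g2_le: "norm g2^2 \<le> L^2 * norm u'^2"
    unfolding g2_def by (simp add: lipschitz_diff_power2_le[OF lip])
  have g1_le: "norm g1^2 \<le> L^2 * norm (fst p)^2"
    unfolding g1_def by (rule lipschitz_diff_power2_le[OF lip])
  have "norm (\<xi>' - \<xi>)^2 \<le> 2 * norm (- E)^2 + 2 * norm ((h / (2 * c)) *\<^sub>R (g1, e *\<^sub>R g2))^2"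
    unfolding Psi_shift_noise_diff[OF assms(1,2) eq] c_def e_def g1_def g2_def X_def
    by (rule norm_add_power2_le)
  also have "norm ((h / (2 * c)) *\<^sub>R (g1, e *\<^sub>R g2))^2 = (h / (2 * c))^2 * (norm g1^2 + e^2 * norm g2^2)"
    using \<open>c > 0\<close> assms(2) by (simp add: norm_Pair power_mult_distrib power_divide e_def algebra_simps)
  also have "\<dots> \<le> (h / (2 * c))^2 * (L^2 * norm (fst p)^2 + L^2 * norm u'^2)"
    using g1_le mult_mono[OF \<open>e^2 \<le> 1\<close> g2_le] by (intro mult_left_mono) auto
  also have "2 * ((h / (2 * c))^2 * (L^2 * norm (fst p)^2 + L^2 * norm u'^2))
      = h^2 * L^2 / (2 * (1 - exp (-\<gamma>*h))) * (norm (fst p)^2 + norm u'^2)"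
    using \<open>c > 0\<close> unfolding c2[symmetric] by (simp add: power_divide field_simps)
  finally show ?thesis
    by (simp add: u'_def)
qed

lemma foldl_take_Suc:
  "k < length xs \<Longrightarrow> foldl f s (take (Suc k) xs) = f (foldl f s (take k xs)) (xs ! k)"
  by (simp add: take_Suc_conv_app_nth)

lemma foldl_take_eq_iff_map_inv:
  assumes "\<And>s. bij (f s)"
  shows "(length zs = n \<and> (\<forall>k\<in>{1..n}. foldl f (T 0) (take k zs) = T k))
     \<longleftrightarrow> zs = map (\<lambda>i. inv (f (T i)) (T (Suc i))) [0..<n]"
proof
  assume zs: "length zs = n \<and> (\<forall>k\<in>{1..n}. foldl f (T 0) (take k zs) = T k)"
  have through: "foldl f (T 0) (take k zs) = T k" if "k \<le> n" for k
    using zs that by (cases k) auto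
  show "zs = map (\<lambda>i. inv (f (T i)) (T (Suc i))) [0..<n]"
  proof (rule nth_equalityI)
    fix i
    assume "i < length zs"
    then have "f (T i) (zs ! i) = T (Suc i)"
      using through[of i] through[of "Suc i"] zs foldl_take_Suc[of i zs f "T 0"] by simp
    then have "zs ! i = inv (f (T i)) (T (Suc i))"
      using bij_is_inj[OF assms] by (metis inv_f_f)
    then show "zs ! i = map (\<lambda>i. inv (f (T i)) (T (Suc i))) [0..<n] ! i"
      using \<open>i < length zs\<close> zs by simp
  qed (use zs in simp)
next
  assume zs: "zs = map (\<lambda>i. inv (f (T i)) (T (Suc i))) [0..<n]"
  have "foldl f (T 0) (take k zs) = T k" if "k \<le> n" for k
    using that
  proof (induction k)
    case (Suc k)
    have "foldl f (T 0) (take (Suc k) zs) = f (foldl f (T 0) (take k zs)) (zs ! k)"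
      using Suc.prems by (intro foldl_take_Suc) (simp add: zs)
    also have "\<dots> = f (T k) (inv (f (T k)) (T (Suc k)))"
      using Suc by (simp add: zs)
    also have "\<dots> = T (Suc k)"
      by (rule surj_f_inv_f[OF bij_is_surj[OF assms]])
    finally show ?case .
  qed simp
  then show "length zs = n \<and> (\<forall>k\<in>{1..n}. foldl f (T 0) (take k zs) = T k)"
    using zs by simp
qed

lemma coal_eq_map_inv:
  assumes "\<gamma> > 0" "h > 0" "y 0 = zt - z"
  shows "coal \<gamma> h G n z zt y xs = map (\<lambda>i. inv (Psi \<gamma> h G (PsiN \<gamma> h G z (take i xs) + y i))
           (PsiN \<gamma> h G z (take (Suc i) xs) + y (Suc i))) [0..<n]"
proof -
  define T where "T k = PsiN \<gamma> h G z (take k xs) + y k" for k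
  have "T 0 = zt"
    using assms(3) by (simp add: T_def PsiN_def)
  then show ?thesis
    using foldl_take_eq_iff_map_inv[of "Psi \<gamma> h G" _ n T, OF bij_Psi[OF assms(1,2)]]
    by (simp add: coal_def PsiN_def[of _ _ _ zt] T_def[symmetric])
qed

lemma Psi_coal_nth:
  assumes "\<gamma> > 0" "h > 0" "y 0 = zt - z" "i < n"
  shows "Psi \<gamma> h G (PsiN \<gamma> h G z (take i xs) + y i) (coal \<gamma> h G n z zt y xs ! i)
       = PsiN \<gamma> h G z (take (Suc i) xs) + y (Suc i)"
  using assms(4)
  by (simp add: coal_eq_map_inv[OF assms(1,2), of y zt z, OF assms(3)]
      surj_f_inv_f[OF bij_is_surj[OF bij_Psi[OF assms(1,2)]]])

lemma coal_ytraj_nth_norm_le: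
  assumes "\<gamma> > 0" "h > 0"
    and lip: "\<And>x x'. norm (G x - G x') \<le> L * norm (x - x')"
    and "i < n" "i < length xs"
  shows "norm (coal \<gamma> h G n z zt (ytraj \<gamma> h n z zt) xs ! i - xs ! i)^2
     \<le> 2 * norm (Ek \<gamma> h n z zt (Suc i))^2 + h^2 * L^2 / (2 * (1 - exp (-\<gamma>*h)))
          * (norm (fst (ytraj \<gamma> h n z zt i))^2 + norm (fst (ytraj \<gamma> h n z zt (Suc i)))^2)"
proof -
  define y where "y = ytraj \<gamma> h n z zt"
  define W where "W k = PsiN \<gamma> h G z (take k xs)" for k
  have y_Suc: "Ah \<gamma> h (y i) - Lh \<gamma> h (Ek \<gamma> h n z zt (Suc i)) = y (Suc i)"
    by (simp add: y_def)
  have "Psi \<gamma> h G (W i + y i) (coal \<gamma> h G n z zt y xs ! i) = W (Suc i) + y (Suc i)"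
    unfolding W_def by (rule Psi_coal_nth[OF assms(1,2) _ assms(4)]) (simp add: y_def)
  also have "W (Suc i) = Psi \<gamma> h G (W i) (xs ! i)"
    using assms(5) by (simp add: W_def PsiN_def foldl_take_Suc)
  finally have "Psi \<gamma> h G (W i + y i) (coal \<gamma> h G n z zt y xs ! i)
      = Psi \<gamma> h G (W i) (xs ! i) + (Ah \<gamma> h (y i) - Lh \<gamma> h (Ek \<gamma> h n z zt (Suc i)))"
    unfolding y_Suc .
  from Psi_shift_noise_norm_le[OF assms(1,2) lip this, unfolded y_Suc] show ?thesis
    by (simp only: y_def)
qed

lemma sum_le_of_step_bound:
  fixes a b f :: "nat \<Rightarrow> real"
  assumes step: "\<And>i. i < n \<Longrightarrow> a i \<le> b (Suc i) + K * (f i + f (Suc i))"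
    and "K \<ge> 0" "f 0 \<ge> 0" "f n = 0"
  shows "(\<Sum>i<n. a i) \<le> (\<Sum>k=1..n. b k) + 2 * K * (\<Sum>k=0..n-1. f k)"
proof -
  have shift: "(\<Sum>i<n. f (Suc i)) \<le> (\<Sum>i<n. f i)"
    using sum.lessThan_Suc_shift[of f n] assms(3,4) by simp
  have "(\<Sum>i<n. K * (f i + f (Suc i))) = K * ((\<Sum>i<n. f i) + (\<Sum>i<n. f (Suc i)))"
    by (simp add: distrib_left sum.distrib sum_distrib_left)
  also have "\<dots> \<le> K * (2 * (\<Sum>i<n. f i))"
    using shift \<open>K \<ge> 0\<close> by (intro mult_left_mono) auto
  finally have "(\<Sum>i<n. K * (f i + f (Suc i))) \<le> 2 * K * (\<Sum>i<n. f i)"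
    by (simp only: mult.left_commute)
  moreover have "(\<Sum>i<n. f i) = (\<Sum>k=0..n-1. f k)"
    using assms(4) by (cases n) (simp_all add: lessThan_Suc_atMost atLeast0AtMost)
  moreover have "(\<Sum>i<n. a i) \<le> (\<Sum>i<n. b (Suc i)) + (\<Sum>i<n. K * (f i + f (Suc i)))"
    unfolding sum.distrib[symmetric] by (intro sum_mono step) simp
  ultimately show ?thesis
    by (simp add: sum.atLeast1_atMost_eq)
qed

theorem mainTheorem7:
  fixes \<gamma> h L :: real and n :: nat and U :: "real^'d \<Rightarrow> real"
    and G :: "real^'d \<Rightarrow> real^'d" and z zt :: "'d st" and \<xi> :: "'d st list"
  assumes "\<gamma> > 0" and "h > 0" and "n \<ge> 1"
    and "\<And>x. (U has_derivative (\<lambda>v. G x \<bullet> v)) (at x)"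
    and "\<exists>G'. (\<forall>x. (G has_derivative blinfun_apply (G' x)) (at x)) \<and> continuous_on UNIV G'"
    and "\<And>x x'. norm (G x - G x') \<le> L * norm (x - x')"
    and "length \<xi> = n"
  shows "(\<Sum>i<n. norm (coal \<gamma> h G n z zt (ytraj \<gamma> h n z zt) \<xi> ! i - \<xi> ! i)^2)
     \<le> 2 * (\<Sum>k=1..n. norm (Ek \<gamma> h n z zt k)^2)
       + (h^2 * L^2 / (1 - exp (-\<gamma>*h))) * (\<Sum>k=0..n-1. norm (fst (ytraj \<gamma> h n z zt k))^2)"
proof -
  let ?K = "h^2 * L^2 / (2 * (1 - exp (-\<gamma>*h)))"
  have "(\<Sum>i<n. norm (coal \<gamma> h G n z zt (ytraj \<gamma> h n z zt) \<xi> ! i - \<xi> ! i)^2)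
     \<le> (\<Sum>k=1..n. 2 * norm (Ek \<gamma> h n z zt k)^2)
       + 2 * ?K * (\<Sum>k=0..n-1. norm (fst (ytraj \<gamma> h n z zt k))^2)"
  proof (rule sum_le_of_step_bound)
    show "norm (coal \<gamma> h G n z zt (ytraj \<gamma> h n z zt) \<xi> ! i - \<xi> ! i)^2
        \<le> 2 * norm (Ek \<gamma> h n z zt (Suc i))^2
          + ?K * (norm (fst (ytraj \<gamma> h n z zt i))^2 + norm (fst (ytraj \<gamma> h n z zt (Suc i)))^2)"
      if "i < n" for i
      using coal_ytraj_nth_norm_le[OF assms(1,2,6) that] that assms(7) by simp
    show "?K \<ge> 0"
      using assms(1,2) by simp
    show "norm (fst (ytraj \<gamma> h n z zt n))^2 = 0"
      by (simp add: ytraj_n_eq_0[OF assms(1-3)])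
  qed simp
  moreover have "2 * ?K = h^2 * L^2 / (1 - exp (-\<gamma>*h))"
    by (simp only: times_divide_eq_right mult_divide_mult_cancel_left_if) simp
  ultimately show ?thesis
    by (simp only: flip: sum_distrib_left)
qed

end
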